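(* Let $s,t$ be real numbers with $t \geq s > 0$. For each positive integer $n$, let $M_n$ denote the maximum of $|\det A|$ over all matrices $A \in \mathcal{G}_s^{n\times n}([0,t])$. Then $M_1 = t$, $M_2 = t^2$, and $M_n = t\,M_{n-1} + s^2 M_{n-2}$ for all integers $n > 2$.
   Context: For a real number $s$, a positive integer $n$ and a set $P \subseteq \mathbb{R}$, $\mathcal{G}_s^{n\times n}(P)$ denotes the set of all $n\times n$ real upper Hessenberg matrices $A=(a_{ij})$ with $a_{i+1,i} = s$ for $1\le i\le n-1$, $a_{ij}=0$ for $i > j+1$, and $a_{ij}\in P$ for all $i \le j$. *)

theory Defs
  imports "Jordan_Normal_Form.Determinant"
begin

definition hess_set :: "real \<Rightarrow> nat \<Rightarrow> real set \<Rightarrow> real mat set" where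
  "hess_set s n P = {A \<in> carrier_mat n n.
     \<forall>i<n. \<forall>j<n. (i = Suc j \<longrightarrow> A $$ (i, j) = s)
                 \<and> (i > Suc j \<longrightarrow> A $$ (i, j) = 0)
                 \<and> (i \<le> j \<longrightarrow> A $$ (i, j) \<in> P)}"

text \<open>M_n: the maximum (supremum, shown attained in the theorem) of |det A|
  over G_s^{n x n}([0,t]).\<close>
definition max_abs_det :: "real \<Rightarrow> real \<Rightarrow> nat \<Rightarrow> real" where
  "max_abs_det s t n = Sup ((\<lambda>A. \<bar>det A\<bar>) ` hess_set s n {0..t})"

end

theory Submission
  imports Defs
begin

(* Expanding along the first column, det A = a_00 det C - s det B for the two minors C, B of
   the column; this is also the determinant of the matrix condense s A obtained by deleting the
   first column and replacing rows 0 and 1 by the single row a_00 (row 1) - s (row 0).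
   Condensation preserves the Hessenberg shape, and if the first row lies in [-q, p] up to a
   global sign, the new first row lies in [-s p, t p + s q] up to sign.  Starting from
   (p, q) = (t, 0) this bounds |det A| by a quantity satisfying M_n = t M_(n-1) + s^2 M_(n-2);
   a matrix with entries alternating between t and 0 along its rows attains the bound. *)

definition condense :: "'a::comm_ring_1 \<Rightarrow> 'a mat \<Rightarrow> 'a mat" where
  "condense s A = mat (dim_row A - 1) (dim_col A - 1) (\<lambda>(i, j).
     if i = 0 then A $$ (0, 0) * A $$ (1, Suc j) - s * A $$ (0, Suc j) else A $$ (Suc i, Suc j))"

lemma det_condense:
  fixes A :: "'a::comm_ring_1 mat"
  assumes A: "A \<in> carrier_mat (Suc m) (Suc m)" and m: "0 < m"
    and col0: "A $$ (1, 0) = s" "\<And>i. 1 < i \<Longrightarrow> i \<le> m \<Longrightarrow> A $$ (i, 0) = 0"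
  shows "det (condense s A) = det A"
proof -
  define C where "C = mat_delete A 0 0"
  define B where "B = mat_delete A 1 0"
  define K where "K = condense s A"
  have carrier: "C \<in> carrier_mat m m" "B \<in> carrier_mat m m" "K \<in> carrier_mat m m"
    using A unfolding C_def B_def K_def condense_def mat_delete_def by auto
  have "det A = (\<Sum>i<Suc m. A $$ (i, 0) * cofactor A i 0)"
    by (rule laplace_expansion_column[OF A]) simp
  also have "\<dots> = (\<Sum>i\<in>{0, 1}. A $$ (i, 0) * cofactor A i 0)"
    by (rule sum.mono_neutral_right) (use m col0 in auto)
  also have "\<dots> = A $$ (0, 0) * det C - s * det B"
    using col0 unfolding cofactor_def C_def B_def by simp
  finally have det_A: "det A = A $$ (0, 0) * det C - s * det B" .
  have same_minors: "cofactor K 0 j = cofactor C 0 j" "cofactor K 0 j = cofactor B 0 j"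
    if "j < m" for j
    unfolding cofactor_def
    by (rule arg_cong[where f = "\<lambda>X. _ * det X"], rule eq_matI;
        use A that in \<open>auto simp: mat_delete_def condense_def K_def C_def B_def\<close>)+
  have row0: "K $$ (0, j) = A $$ (0, 0) * C $$ (0, j) - s * B $$ (0, j)" if "j < m" for j
    using A that m by (auto simp: mat_delete_def condense_def K_def B_def C_def)
  have "det K = (\<Sum>j<m. K $$ (0, j) * cofactor K 0 j)"
    by (rule laplace_expansion_row[OF carrier(3) m])
  also have "\<dots> = (\<Sum>j<m. A $$ (0, 0) * (C $$ (0, j) * cofactor C 0 j)
                         - s * (B $$ (0, j) * cofactor B 0 j))"
    by (rule sum.cong) (auto simp: row0 same_minors(1)[symmetric] same_minors(2)[symmetric] algebra_simps)
  also have "\<dots> = A $$ (0, 0) * det C - s * det B"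
    by (simp add: laplace_expansion_row[OF carrier(1) m] laplace_expansion_row[OF carrier(2) m]
        sum_subtractf sum_distrib_left)
  finally show ?thesis using det_A K_def by simp
qed

fun hess_det_bound :: "real \<Rightarrow> real \<Rightarrow> nat \<Rightarrow> real \<Rightarrow> real \<Rightarrow> real" where
  "hess_det_bound s t 0 p q = 1"
| "hess_det_bound s t (Suc 0) p q = p"
| "hess_det_bound s t (Suc (Suc m)) p q = hess_det_bound s t (Suc m) (t * p + s * q) (s * p)"

lemma hess_det_bound_nonneg:
  "0 \<le> s \<Longrightarrow> 0 \<le> t \<Longrightarrow> 0 \<le> p \<Longrightarrow> 0 \<le> q \<Longrightarrow> 0 \<le> hess_det_bound s t n p q"
  by (induction s t n p q rule: hess_det_bound.induct) auto

lemma hess_det_bound_Suc_Suc_Suc: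
  "hess_det_bound s t (Suc (Suc (Suc m))) p q
     = t * hess_det_bound s t (Suc (Suc m)) p q + s\<^sup>2 * hess_det_bound s t (Suc m) p q"
proof (induction m arbitrary: p q)
  case 0
  then show ?case by (simp add: algebra_simps power2_eq_square)
next
  case (Suc m)
  then show ?case by simp
qed

definition hess_set_row0 :: "real \<Rightarrow> real \<Rightarrow> nat \<Rightarrow> real \<Rightarrow> real \<Rightarrow> real mat set" where
  "hess_set_row0 s t n p q = {A \<in> carrier_mat n n.
     (\<forall>i<n. \<forall>j<n. (i = Suc j \<longrightarrow> A $$ (i, j) = s)
                 \<and> (i > Suc j \<longrightarrow> A $$ (i, j) = 0)
                 \<and> (0 < i \<and> i \<le> j \<longrightarrow> A $$ (i, j) \<in> {0..t}))
     \<and> (\<exists>\<sigma>\<in>{-1, 1}. \<forall>j<n. \<sigma> * A $$ (0, j) \<in> {-q..p})}"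

lemma hess_set_subset_hess_set_row0: "hess_set s n {0..t} \<subseteq> hess_set_row0 s t n t 0"
  unfolding hess_set_def hess_set_row0_def by force

lemma condensed_entry_bounds:
  fixes s t p q a b c :: real
  assumes "0 \<le> s" "s \<le> t" "0 \<le> q" "q \<le> p"
    and "a \<in> {-q..p}" "b \<in> {-q..p}" "c \<in> {0..t}"
  shows "0 \<le> a \<Longrightarrow> a * c - s * b \<in> {-(s * p)..t * p + s * q}"
    and "a \<le> 0 \<Longrightarrow> -(a * c - s * b) \<in> {-(s * p)..t * p + s * q}"
proof -
  have sb: "-(s * q) \<le> s * b" "s * b \<le> s * p"
    using assms mult_left_mono[of "-q" b s] mult_left_mono[of b p s] by auto
  have sq: "s * q \<le> s * p" using assms by (simp add: mult_left_mono)
  show "a * c - s * b \<in> {-(s * p)..t * p + s * q}" if "0 \<le> a"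
  proof -
    have "0 \<le> a * c" "a * c \<le> t * p"
      using that assms mult_mono[of a p c t] by (auto simp: mult.commute)
    then show ?thesis using sb by auto
  qed
  show "-(a * c - s * b) \<in> {-(s * p)..t * p + s * q}" if "a \<le> 0"
  proof -
    have "0 \<le> -a * c" "-a * c \<le> t * q"
      using that assms mult_mono[of "-a" q c t] by (auto simp: mult.commute mult_nonpos_nonneg)
    moreover have "t * q + s * p \<le> t * p + s * q"
      using mult_nonneg_nonneg[of "t - s" "p - q"] assms by (simp add: algebra_simps)
    ultimately show ?thesis using sb sq by auto
  qed
qed

lemma condense_in_hess_set_row0:
  assumes "0 \<le> s" "s \<le> t" "0 \<le> q" "q \<le> p"
    and A: "A \<in> hess_set_row0 s t (Suc (Suc k)) p q"
  shows "condense s A \<in> hess_set_row0 s t (Suc k) (t * p + s * q) (s * p)"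
proof -
  obtain \<sigma> where carrier: "A \<in> carrier_mat (Suc (Suc k)) (Suc (Suc k))"
    and lower: "\<forall>i<Suc (Suc k). \<forall>j<Suc (Suc k).
        (i = Suc j \<longrightarrow> A $$ (i, j) = s) \<and> (i > Suc j \<longrightarrow> A $$ (i, j) = 0)
        \<and> (0 < i \<and> i \<le> j \<longrightarrow> A $$ (i, j) \<in> {0..t})"
    and \<sigma>: "\<sigma> \<in> {-1, 1}" "\<forall>j<Suc (Suc k). \<sigma> * A $$ (0, j) \<in> {-q..p}"
    using A unfolding hess_set_row0_def mem_Collect_eq by (elim conjE bexE) blast
  have entry: "condense s A $$ (i, j) = (if i = 0 then A $$ (0, 0) * A $$ (1, Suc j) - s * A $$ (0, Suc j)
                                         else A $$ (Suc i, Suc j))"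
    if "i < Suc k" "j < Suc k" for i j
    using that carrier unfolding condense_def by auto
  define a where "a = \<sigma> * A $$ (0, 0)"
  define \<tau> where "\<tau> = (if 0 \<le> a then \<sigma> else - \<sigma>)"
  have "\<tau> * condense s A $$ (0, j) \<in> {-(s * p)..t * p + s * q}" if "j < Suc k" for j
  proof -
    have signed: "\<sigma> * condense s A $$ (0, j) = a * A $$ (1, Suc j) - s * (\<sigma> * A $$ (0, Suc j))"
      using entry[OF _ that] unfolding a_def by (simp add: algebra_simps)
    have "a \<in> {-q..p}" "\<sigma> * A $$ (0, Suc j) \<in> {-q..p}" "A $$ (1, Suc j) \<in> {0..t}"
      using \<sigma>(2)[rule_format] lower[rule_format, of 1 "Suc j"] that unfolding a_def by auto
    note bounds = condensed_entry_bounds[OF assms(1-4) this]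
    show ?thesis
    proof (cases "0 \<le> a")
      case True
      then show ?thesis using bounds(1) signed unfolding \<tau>_def by simp
    next
      case False
      then show ?thesis using bounds(2) signed unfolding \<tau>_def by simp
    qed
  qed
  moreover have "\<tau> \<in> {-1, 1}" using \<sigma>(1) unfolding \<tau>_def by auto
  moreover have "condense s A \<in> carrier_mat (Suc k) (Suc k)"
    using carrier by (simp add: condense_def)
  moreover have "(i = Suc j \<longrightarrow> condense s A $$ (i, j) = s)
      \<and> (i > Suc j \<longrightarrow> condense s A $$ (i, j) = 0)
      \<and> (0 < i \<and> i \<le> j \<longrightarrow> condense s A $$ (i, j) \<in> {0..t})"
    if "i < Suc k" "j < Suc k" for i j
    using lower[rule_format, of "Suc i" "Suc j"] entry[OF that] that by auto
  ultimately show ?thesis unfolding hess_set_row0_def by blast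
qed

lemma abs_det_le_hess_det_bound:
  "0 \<le> s \<Longrightarrow> s \<le> t \<Longrightarrow> 0 \<le> q \<Longrightarrow> q \<le> p \<Longrightarrow> A \<in> hess_set_row0 s t n p q
    \<Longrightarrow> \<bar>det A\<bar> \<le> hess_det_bound s t n p q"
proof (induction s t n p q arbitrary: A rule: hess_det_bound.induct)
  case (1 s t p q)
  then show ?case unfolding hess_set_row0_def by simp
next
  case (2 s t p q)
  then have A: "A \<in> carrier_mat 1 1" and "\<exists>\<sigma>\<in>{-1, 1}. \<sigma> * A $$ (0, 0) \<in> {-q..p}"
    unfolding hess_set_row0_def by auto
  then show ?case using det_single[OF A] 2 by auto
next
  case (3 s t k p q)
  have "det (condense s A) = det A"
    by (rule det_condense) (use "3.prems"(5) in \<open>auto simp: hess_set_row0_def\<close>)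
  moreover have "\<bar>det (condense s A)\<bar> \<le> hess_det_bound s t (Suc k) (t * p + s * q) (s * p)"
  proof (rule "3.IH")
    have "0 \<le> p" using "3.prems" by linarith
    then show "0 \<le> s * p" using "3.prems" by simp
    have "s * p \<le> t * p" using mult_right_mono[OF "3.prems"(2) \<open>0 \<le> p\<close>] .
    moreover have "0 \<le> s * q" using "3.prems" by simp
    ultimately show "s * p \<le> t * p + s * q" by linarith
  qed (use "3.prems" condense_in_hess_set_row0 in auto)
  ultimately show ?case by simp
qed

(* Condensation maps this matrix to one of the same shape with (p, q) replaced by
   (t p + s q, s p), so every estimate behind abs_det_le_hess_det_bound is an equality for it. *)
definition hess_extremal :: "real \<Rightarrow> real \<Rightarrow> nat \<Rightarrow> real \<Rightarrow> real \<Rightarrow> real mat" where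
  "hess_extremal s t n p q = mat n n (\<lambda>(i, j).
     if i = Suc j then s
     else if i \<le> j then (if even (j - i) then (if i = 0 then p else t) else (if i = 0 then -q else 0))
     else 0)"

lemma condense_hess_extremal:
  "condense s (hess_extremal s t (Suc (Suc k)) p q) = hess_extremal s t (Suc k) (t * p + s * q) (s * p)"
proof (rule eq_matI)
  fix i j assume "i < dim_row (hess_extremal s t (Suc k) (t * p + s * q) (s * p))"
    and "j < dim_col (hess_extremal s t (Suc k) (t * p + s * q) (s * p))"
  then have "i < Suc k" "j < Suc k" unfolding hess_extremal_def by auto
  then show "condense s (hess_extremal s t (Suc (Suc k)) p q) $$ (i, j)
      = hess_extremal s t (Suc k) (t * p + s * q) (s * p) $$ (i, j)"
    by (cases "i = 0"; cases "even j") (auto simp: condense_def hess_extremal_def algebra_simps)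
qed (auto simp: condense_def hess_extremal_def)

lemma det_hess_extremal: "det (hess_extremal s t n p q) = hess_det_bound s t n p q"
proof (induction s t n p q rule: hess_det_bound.induct)
  case (1 s t p q)
  then show ?case by (simp add: hess_extremal_def)
next
  case (2 s t p q)
  have "hess_extremal s t 1 p q \<in> carrier_mat 1 1" unfolding hess_extremal_def by simp
  from det_single[OF this] show ?case by (simp add: hess_extremal_def)
next
  case (3 s t k p q)
  have "det (hess_extremal s t (Suc (Suc k)) p q) = det (condense s (hess_extremal s t (Suc (Suc k)) p q))"
    by (rule det_condense[symmetric]) (auto simp: hess_extremal_def)
  then show ?case using "3.IH" by (simp add: condense_hess_extremal)
qed

lemma hess_extremal_in_hess_set: "0 \<le> t \<Longrightarrow> hess_extremal s t n t 0 \<in> hess_set s n {0..t}"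
  unfolding hess_set_def hess_extremal_def by auto

lemma abs_det_hess_set_le:
  assumes "0 \<le> s" "s \<le> t" and A: "A \<in> hess_set s n {0..t}"
  shows "\<bar>det A\<bar> \<le> hess_det_bound s t n t 0"
proof (rule abs_det_le_hess_det_bound)
  show "A \<in> hess_set_row0 s t n t 0" using A hess_set_subset_hess_set_row0 by blast
qed (use assms in auto)

lemma abs_det_hess_extremal:
  "0 \<le> s \<Longrightarrow> 0 \<le> t \<Longrightarrow> \<bar>det (hess_extremal s t n t 0)\<bar> = hess_det_bound s t n t 0"
  by (simp add: det_hess_extremal hess_det_bound_nonneg)

lemma max_abs_det_eq_hess_det_bound:
  assumes "0 \<le> s" "s \<le> t"
  shows "max_abs_det s t n = hess_det_bound s t n t 0"
  unfolding max_abs_det_def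
proof (rule cSup_eq_maximum)
  have "0 \<le> t" using assms by linarith
  then show "hess_det_bound s t n t 0 \<in> (\<lambda>A. \<bar>det A\<bar>) ` hess_set s n {0..t}"
    using rev_image_eqI[OF hess_extremal_in_hess_set] abs_det_hess_extremal assms by metis
next
  fix x assume "x \<in> (\<lambda>A. \<bar>det A\<bar>) ` hess_set s n {0..t}"
  then obtain A where "A \<in> hess_set s n {0..t}" "x = \<bar>det A\<bar>" by blast
  then show "x \<le> hess_det_bound s t n t 0" using abs_det_hess_set_le[OF assms] by simp
qed

theorem theorem2p6:
  fixes s t :: real
  assumes "0 < s" and "s \<le> t"
  shows "(\<forall>n\<ge>1. (\<exists>A\<in>hess_set s n {0..t}. \<bar>det A\<bar> = max_abs_det s t n)
                \<and> (\<forall>A\<in>hess_set s n {0..t}. \<bar>det A\<bar> \<le> max_abs_det s t n))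
         \<and> max_abs_det s t 1 = t
         \<and> max_abs_det s t 2 = t ^ 2
         \<and> (\<forall>n>2. max_abs_det s t n = t * max_abs_det s t (n - 1) + s ^ 2 * max_abs_det s t (n - 2))"
proof (intro conjI allI impI ballI)
  have st: "0 \<le> s" "s \<le> t" and t: "0 \<le> t" using assms by auto
  note M = max_abs_det_eq_hess_det_bound[OF st]
  fix n :: nat
  show "\<exists>A\<in>hess_set s n {0..t}. \<bar>det A\<bar> = max_abs_det s t n"
  proof
    show "hess_extremal s t n t 0 \<in> hess_set s n {0..t}" using t by (rule hess_extremal_in_hess_set)
    show "\<bar>det (hess_extremal s t n t 0)\<bar> = max_abs_det s t n"
      using st t by (simp add: M abs_det_hess_extremal)
  qed
  show "\<bar>det A\<bar> \<le> max_abs_det s t n" if "A \<in> hess_set s n {0..t}" for A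
    using abs_det_hess_set_le[OF st that] by (simp add: M)
  show "max_abs_det s t 1 = t" "max_abs_det s t 2 = t ^ 2"
    by (simp_all add: M numeral_2_eq_2 power2_eq_square)
  assume "2 < n"
  define m where "m = n - 3"
  have n: "n = Suc (Suc (Suc m))" "n - 1 = Suc (Suc m)" "n - 2 = Suc m"
    using \<open>2 < n\<close> unfolding m_def by arith+
  show "max_abs_det s t n = t * max_abs_det s t (n - 1) + s ^ 2 * max_abs_det s t (n - 2)"
    unfolding n(2,3) M unfolding n(1) by (rule hess_det_bound_Suc_Suc_Suc)
qed

end
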